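(* Let $E$ be a Banach lattice with an order continuous norm, let $\mathfrak{B}$ be a Boolean subalgebra of $\mathfrak{B}(E)$, and let $S\colon\mathfrak{B}\to\mathfrak{B}$ be a sectionally open transformation with $S(\mathbf 0)=\mathbf 0$. If $\xi$ is a forward filtration in $\mathfrak{B}$, then $n\mapsto S(\xi_n)$, $n\in\{0,1,\dots,\infty\}$, is a forward filtration in $\mathfrak{B}$. In particular, the semigroup of sectionally open transformations fixing $\mathbf 0$ acts on the set of forward filtrations in $\mathfrak{B}$ by coordinatewise evaluation.
   Context: $\mathfrak{B}(E)$ is the Boolean algebra of all order projections on $E$ ($\pi\le\rho$ iff $\pi\rho=\pi$, zero $\mathbf 0$, unit $\mathbf 1=I_E$). For $\pi\in\mathfrak{B}$ let $\mathrm{Sc}(\pi)=\{\pi'\in\mathfrak{B}:\pi\le\pi'\}$; a map $S\colon\mathfrak{B}\to\mathfrak{B}$ is sectionally open if $S(\mathrm{Sc}(\pi))=\mathrm{Sc}(S(\pi))$ for all $\pi\in\mathfrak{B}$. A forward filtration in $\mathfrak{B}$ is a map $\xi\colon\{0,1,\dots,\infty\}\to\mathfrak{B}$ with $\xi_n\le\xi_{n+1}$ for all $n\ge0$, $\xi_0=\mathbf 0$, $\xi_\infty=\mathbf 1$. *)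

theory Defs
  imports "HOL-Analysis.Analysis" "HOL-Library.Extended_Nat"
begin

definition lat_abs :: "'a::{ordered_real_vector, lattice} \<Rightarrow> 'a" where
  "lat_abs x = sup x (- x)"

definition banach_lattice :: "'a::{banach, ordered_real_vector, lattice} itself \<Rightarrow> bool" where
  "banach_lattice _ \<longleftrightarrow> (\<forall>x y :: 'a. lat_abs x \<le> lat_abs y \<longrightarrow> norm x \<le> norm y)"

definition order_continuous_norm :: "'a::{banach, ordered_real_vector, lattice} itself \<Rightarrow> bool" where
  "order_continuous_norm _ \<longleftrightarrow>
     (\<forall>D :: 'a set. D \<noteq> {} \<and> (\<forall>x\<in>D. 0 \<le> x)
        \<and> (\<forall>x\<in>D. \<forall>y\<in>D. \<exists>z\<in>D. z \<le> x \<and> z \<le> y)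
        \<and> (\<forall>l. (\<forall>x\<in>D. l \<le> x) \<longrightarrow> l \<le> 0)
        \<longrightarrow> (INF x\<in>D. norm x) = 0)"

definition order_projections :: "('a::{ordered_real_vector, lattice} \<Rightarrow> 'a) set" where
  "order_projections = {P. linear P \<and> P \<circ> P = P \<and> (\<forall>x. 0 \<le> x \<longrightarrow> 0 \<le> P x \<and> P x \<le> x)}"

definition proj_le :: "('a \<Rightarrow> 'a) \<Rightarrow> ('a \<Rightarrow> 'a) \<Rightarrow> bool" where
  "proj_le \<pi> \<rho> \<longleftrightarrow> \<pi> \<circ> \<rho> = \<pi>"

definition proj_zero :: "'a::zero \<Rightarrow> 'a" where
  "proj_zero = (\<lambda>x. 0)"

text \<open>Boolean subalgebra of the Boolean algebra of order projections: contains 0 and I and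
is closed under meet (\<pi>\<rho>), join (\<pi>+\<rho>-\<pi>\<rho>) and complement (I-\<pi>).\<close>

definition boolean_subalgebra :: "('a::{ordered_real_vector, lattice} \<Rightarrow> 'a) set \<Rightarrow> bool" where
  "boolean_subalgebra B \<longleftrightarrow> B \<subseteq> order_projections \<and> proj_zero \<in> B \<and> id \<in> B
     \<and> (\<forall>\<pi>\<in>B. \<forall>\<rho>\<in>B. \<pi> \<circ> \<rho> \<in> B)
     \<and> (\<forall>\<pi>\<in>B. \<forall>\<rho>\<in>B. (\<lambda>x. \<pi> x + \<rho> x - \<pi> (\<rho> x)) \<in> B)
     \<and> (\<forall>\<pi>\<in>B. (\<lambda>x. x - \<pi> x) \<in> B)"

definition Sc :: "('a \<Rightarrow> 'a) set \<Rightarrow> ('a \<Rightarrow> 'a) \<Rightarrow> ('a \<Rightarrow> 'a) set" where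
  "Sc B \<pi> = {\<pi>' \<in> B. proj_le \<pi> \<pi>'}"

definition sectionally_open :: "('a \<Rightarrow> 'a) set \<Rightarrow> (('a \<Rightarrow> 'a) \<Rightarrow> ('a \<Rightarrow> 'a)) \<Rightarrow> bool" where
  "sectionally_open B S \<longleftrightarrow> S ` B \<subseteq> B \<and> (\<forall>\<pi>\<in>B. S ` Sc B \<pi> = Sc B (S \<pi>))"

definition forward_filtration :: "('a::zero \<Rightarrow> 'a) set \<Rightarrow> (enat \<Rightarrow> ('a \<Rightarrow> 'a)) \<Rightarrow> bool" where
  "forward_filtration B \<xi> \<longleftrightarrow> (\<forall>n. \<xi> n \<in> B)
     \<and> (\<forall>n::nat. proj_le (\<xi> (enat n)) (\<xi> (enat (Suc n))))
     \<and> \<xi> 0 = proj_zero \<and> \<xi> \<infinity> = id"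

end

theory Submission
  imports Defs
begin

text \<open>A sectionally open map sends
the section above \<open>\<pi>\<close> onto the section above \<open>S \<pi>\<close>, so it is monotone; and since the
section above the top element \<open>id\<close> is just \<open>{id}\<close>, it fixes \<open>id\<close>.\<close>

lemma Sc_id:
  assumes "id \<in> B"
  shows "Sc B id = {id}"
  using assms unfolding Sc_def proj_le_def by auto

lemma sectionally_open_fixes_id:
  assumes "sectionally_open B S" and "id \<in> B"
  shows "S id = id"
proof -
  have "{S id} = Sc B (S id)"
    using assms Sc_id[of B] unfolding sectionally_open_def by (metis image_empty image_insert)
  moreover have "id \<in> Sc B (S id)"
    using assms(2) unfolding Sc_def proj_le_def by simp
  ultimately show ?thesis by (metis singletonD)
qed

lemma sectionally_open_mono:
  assumes "sectionally_open B S" and "\<pi> \<in> B" and "\<rho> \<in> B" and "proj_le \<pi> \<rho>"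
  shows "proj_le (S \<pi>) (S \<rho>)"
proof -
  have "\<rho> \<in> Sc B \<pi>"
    using assms(3,4) unfolding Sc_def by simp
  then have "S \<rho> \<in> Sc B (S \<pi>)"
    using assms(1,2) unfolding sectionally_open_def by blast
  then show ?thesis
    unfolding Sc_def by simp
qed

lemma forward_filtration_sectionally_open_image:
  assumes "sectionally_open B S" and "id \<in> B" and "S proj_zero = proj_zero"
    and "forward_filtration B \<xi>"
  shows "forward_filtration B (\<lambda>n. S (\<xi> n))"
proof -
  have "S (\<xi> n) \<in> B" for n
    using assms(1,4) unfolding sectionally_open_def forward_filtration_def by blast
  moreover have "proj_le (S (\<xi> (enat n))) (S (\<xi> (enat (Suc n))))" for n
    using assms(4) sectionally_open_mono[OF assms(1)] unfolding forward_filtration_def by blast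
  ultimately show ?thesis
    using assms sectionally_open_fixes_id[OF assms(1,2)] unfolding forward_filtration_def by simp
qed

theorem proposition3p18:
  fixes B :: "('a::{banach, ordered_real_vector, lattice} \<Rightarrow> 'a) set"
    and S :: "('a \<Rightarrow> 'a) \<Rightarrow> ('a \<Rightarrow> 'a)"
    and \<xi> :: "enat \<Rightarrow> ('a \<Rightarrow> 'a)"
  assumes "banach_lattice TYPE('a)"
    and "order_continuous_norm TYPE('a)"
    and "boolean_subalgebra B"
    and "sectionally_open B S"
    and "S proj_zero = proj_zero"
    and "forward_filtration B \<xi>"
  shows "forward_filtration B (\<lambda>n. S (\<xi> n))"
proof -
  have "id \<in> B"
    using assms(3) unfolding boolean_subalgebra_def by simp
  then show ?thesis
    using forward_filtration_sectionally_open_image assms(4-6) by blast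
qed

end
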